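(* Let $\mathbb{S}=(S,\Sigma,\{\tau_a\mid a\in L\})$ be an LMP, let $\Sigma_0\subseteq\Sigma$ be a sub-$\sigma$-algebra with $\mathcal{R}(\Sigma_0)=\mathcal{R}^T(\Sigma_0)$, and put $R_0=\mathcal{R}(\Sigma_0)$. Then for every limit ordinal $\lambda$, $\mathcal{R}(\Sigma_\lambda)=\mathcal{R}^T(\Sigma_\lambda)$.
   Context: An LMP is a triple $(S,\Sigma,\{\tau_a\mid a\in L\})$ with $(S,\Sigma)$ a measurable space, $L$ countable, and each $\tau_a:S\times\Sigma\to[0,1]$ a Markov kernel (subprobability measure in the second argument, measurable in the first). For $R\subseteq S\times S$, $A$ is $R$-closed if $x\in A$, $xRs$ imply $s\in A$; $\Sigma(R)$ is the family of $R$-closed members of $\Sigma$. For $\Gamma\subseteq\mathcal{P}(S)$, $\mathcal{R}(\Gamma)=\{(s,t):\forall A\in\Gamma\,(s\in A\iff t\in A)\}$; for $\Lambda\subseteq\Sigma$, $\mathcal{R}^T(\Lambda)=\{(s,t):\forall a\in L\,\forall E\in\Lambda\ \tau_a(s,E)=\tau_a(t,E)\}$. $\mathcal{O}(R)=\mathcal{R}^T(\Sigma(R))$, $\mathcal{G}(\Lambda)=\Sigma(\mathcal{R}^T(\Lambda))$. Iterates: $R_{\alpha+1}=\mathcal{O}(R_\alpha)$, $R_\lambda=\bigcap_{\alpha<\lambda}R_\alpha$ for limit $\lambda$; $\Sigma_{\alpha+1}=\mathcal{G}(\Sigma_\alpha)$, $\Sigma_\lambda=\sigma(\bigcup_{\alpha<\lambda}\Sigma_\alpha)$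 for limit $\lambda$. *)

theory Defs
  imports "HOL-Analysis.Analysis"
begin

definition lmp :: "'a set \<Rightarrow> 'a set set \<Rightarrow> 'l set \<Rightarrow> ('l \<Rightarrow> 'a \<Rightarrow> 'a set \<Rightarrow> real) \<Rightarrow> bool" where
  "lmp S Sig L tau \<longleftrightarrow>
     sigma_algebra S Sig \<and> countable L \<and>
     (\<forall>a\<in>L. \<forall>s\<in>S.
        measure_space S Sig (\<lambda>E. ennreal (tau a s E)) \<and>
        (\<forall>E\<in>Sig. 0 \<le> tau a s E \<and> tau a s E \<le> 1)) \<and>
     (\<forall>a\<in>L. \<forall>E\<in>Sig. (\<lambda>s. tau a s E) \<in> borel_measurable (measure_of S Sig (\<lambda>_. 0)))"

definition R_closed :: "('a \<times> 'a) set \<Rightarrow> 'a set \<Rightarrow> bool" where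
  "R_closed R A \<longleftrightarrow> (\<forall>x s. x \<in> A \<longrightarrow> (x, s) \<in> R \<longrightarrow> s \<in> A)"

definition closed_sets :: "'a set set \<Rightarrow> ('a \<times> 'a) set \<Rightarrow> 'a set set" where
  "closed_sets Sig R = {A \<in> Sig. R_closed R A}"

definition rel_of :: "'a set \<Rightarrow> 'a set set \<Rightarrow> ('a \<times> 'a) set" where
  "rel_of S Gm = {(s, t). s \<in> S \<and> t \<in> S \<and> (\<forall>A\<in>Gm. s \<in> A \<longleftrightarrow> t \<in> A)}"

definition relT_of :: "'a set \<Rightarrow> 'l set \<Rightarrow> ('l \<Rightarrow> 'a \<Rightarrow> 'a set \<Rightarrow> real) \<Rightarrow> 'a set set \<Rightarrow> ('a \<times> 'a) set" where
  "relT_of S L tau Lam = {(s, t). s \<in> S \<and> t \<in> S \<and> (\<forall>a\<in>L. \<forall>E\<in>Lam. tau a s E = tau a t E)}"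

definition G_op :: "'a set \<Rightarrow> 'a set set \<Rightarrow> 'l set \<Rightarrow> ('l \<Rightarrow> 'a \<Rightarrow> 'a set \<Rightarrow> real) \<Rightarrow> 'a set set \<Rightarrow> 'a set set" where
  "G_op S Sig L tau Lam = closed_sets Sig (relT_of S L tau Lam)"

text \<open>Ordinals are represented by elements of an arbitrary well-ordered type 'i.\<close>
definition is_succ_of :: "'i::wellorder \<Rightarrow> 'i \<Rightarrow> bool" where
  "is_succ_of \<alpha> \<beta> \<longleftrightarrow> \<beta> < \<alpha> \<and> (\<forall>\<gamma>. \<not> (\<beta> < \<gamma> \<and> \<gamma> < \<alpha>))"

definition is_limit :: "'i::wellorder \<Rightarrow> bool" where
  "is_limit l \<longleftrightarrow> (\<exists>\<beta>. \<beta> < l) \<and> (\<forall>\<beta><l. \<exists>\<gamma>. \<beta> < \<gamma> \<and> \<gamma> < l)"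

definition Sig_iter :: "'a set \<Rightarrow> 'a set set \<Rightarrow> 'l set \<Rightarrow> ('l \<Rightarrow> 'a \<Rightarrow> 'a set \<Rightarrow> real)
    \<Rightarrow> 'a set set \<Rightarrow> 'i::wellorder \<Rightarrow> 'a set set" where
  "Sig_iter S Sig L tau Sig0 = wfrec {(x, y). x < y}
     (\<lambda>f \<alpha>. if \<exists>\<beta>. is_succ_of \<alpha> \<beta> then G_op S Sig L tau (f (THE \<beta>. is_succ_of \<alpha> \<beta>))
            else if \<forall>\<beta>. \<not> \<beta> < \<alpha> then Sig0
            else sigma_sets S (\<Union>\<beta>\<in>{\<beta>. \<beta> < \<alpha>}. f \<beta>))"

end

theory Submission
  imports Defs "HOL-Probability.Conditional_Expectation"
begin

text \<open>Along the iteration \<open>\<Sigma>\<^sub>\<alpha>\<close> the families increase and \<open>\<Sigma>\<^sub>\<alpha>\<^sub>+\<^sub>1 = \<G>(\<Sigma>\<^sub>\<alpha>)\<close>, so for a limit \<open>\<lambda>\<close>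
  the union \<open>U\<close> of the \<open>\<Sigma>\<^sub>\<beta>\<close>, \<open>\<beta> < \<lambda>\<close>, is also the union of the \<open>\<G>(\<Sigma>\<^sub>\<beta>)\<close>. Two facts then
  give the claim. First, \<open>\<R>(\<G>(\<Lambda>)) = \<R>\<^sup>T(\<Lambda>)\<close> for every \<open>\<Lambda> \<subseteq> \<Sigma>\<close>: the level sets of
  \<open>\<tau>\<^sub>a(\<cdot>, E)\<close> are measurable and \<open>\<R>\<^sup>T(\<Lambda>)\<close>-closed. Hence \<open>\<R>(U) = \<R>\<^sup>T(U)\<close>. Second, passing
  to the generated \<open>\<sigma>\<close>-algebra changes neither side: trivially for \<open>\<R>\<close>, and for \<open>\<R>\<^sup>T\<close> because
  \<open>U\<close> is a union of a chain of \<open>\<sigma>\<close>-algebras, hence intersection-stable, so two finite measures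
  agreeing on \<open>U\<close> agree on \<open>\<sigma>(U)\<close>.\<close>

lemma emeasure_eq_on_sigma_sets_generator:
  assumes sets_eq: "sets N = sets M" and "Int_stable E" "E \<subseteq> sets M" "space M \<in> E"
    and finite: "emeasure M (space M) \<noteq> \<infinity>"
    and eq: "\<And>X. X \<in> E \<Longrightarrow> emeasure M X = emeasure N X"
    and A: "A \<in> sigma_sets (space M) E"
  shows "emeasure M A = emeasure N A"
proof -
  let ?F = "sigma (space M) E"
  have E_Pow: "E \<subseteq> Pow (space M)" using \<open>E \<subseteq> sets M\<close> sets.sets_into_space by blast
  have sets_F: "sets ?F = sigma_sets (space M) E" using E_Pow by simp
  have "sigma_sets (space M) E \<subseteq> sets M" using \<open>E \<subseteq> sets M\<close> by (rule sets.sigma_sets_subset)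
  then have sub_M: "subalgebra M ?F" and sub_N: "subalgebra N ?F"
    unfolding subalgebra_def using E_Pow sets_eq sets_eq_imp_space_eq[OF sets_eq] by auto
  have "restr_to_subalg M ?F = restr_to_subalg N ?F"
  proof (rule measure_eqI_generator_eq[where \<Omega> = "space M" and E = E and A = "\<lambda>_. space M"])
    show "emeasure (restr_to_subalg M ?F) X = emeasure (restr_to_subalg N ?F) X" if "X \<in> E" for X
      using that eq emeasure_restr_to_subalg[OF sub_M] emeasure_restr_to_subalg[OF sub_N] sets_F by auto
    show "emeasure (restr_to_subalg M ?F) (space M) \<noteq> \<infinity>"
      using emeasure_restr_to_subalg[OF sub_M] sets_F finite \<open>space M \<in> E\<close> by auto
  qed (use \<open>Int_stable E\<close> E_Pow \<open>space M \<in> E\<close> sets_F sets_restr_to_subalg[OF sub_M]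
         sets_restr_to_subalg[OF sub_N] in auto)
  then show ?thesis
    using A sets_F emeasure_restr_to_subalg[OF sub_M] emeasure_restr_to_subalg[OF sub_N] by metis
qed

lemma Int_stable_UN_chain:
  fixes F :: "'i::linorder \<Rightarrow> 'a set set"
  assumes "mono_on I F" and "\<And>i. i \<in> I \<Longrightarrow> Int_stable (F i)"
  shows "Int_stable (\<Union>i\<in>I. F i)"
proof (rule Int_stableI)
  fix A B assume "A \<in> (\<Union>i\<in>I. F i)" "B \<in> (\<Union>i\<in>I. F i)"
  then obtain i j where "i \<in> I" "j \<in> I" "A \<in> F i" "B \<in> F j" by blast
  moreover have "max i j \<in> I" using \<open>i \<in> I\<close> \<open>j \<in> I\<close> by (simp add: max_def)
  ultimately have "A \<in> F (max i j)" "B \<in> F (max i j)"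
    using mono_onD[OF assms(1)] by (metis max.cobounded1 max.cobounded2 subsetD)+
  then show "A \<inter> B \<in> (\<Union>i\<in>I. F i)"
    using assms(2)[OF \<open>max i j \<in> I\<close>] \<open>max i j \<in> I\<close> by (auto simp: Int_stable_def)
qed

lemma rel_of_sigma_sets: "rel_of S (sigma_sets S U) = rel_of S U"
proof
  show "rel_of S (sigma_sets S U) \<subseteq> rel_of S U"
    unfolding rel_of_def by (auto intro: sigma_sets.Basic)
  show "rel_of S U \<subseteq> rel_of S (sigma_sets S U)"
  proof (clarify)
    fix s t assume st: "(s, t) \<in> rel_of S U"
    then have s: "s \<in> S" and t: "t \<in> S" and sep: "\<forall>A\<in>U. s \<in> A \<longleftrightarrow> t \<in> A"
      by (simp_all add: rel_of_def)
    have "s \<in> A \<longleftrightarrow> t \<in> A" if "A \<in> sigma_sets S U" for A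
      using that by induction (use sep s t in auto)
    then show "(s, t) \<in> rel_of S (sigma_sets S U)"
      using s t by (simp add: rel_of_def)
  qed
qed

lemma rel_of_UN:
  assumes "I \<noteq> {}"
  shows "rel_of S (\<Union>i\<in>I. F i) = (\<Inter>i\<in>I. rel_of S (F i))"
  using assms unfolding rel_of_def by auto

lemma relT_of_UN:
  assumes "I \<noteq> {}"
  shows "relT_of S L tau (\<Union>i\<in>I. F i) = (\<Inter>i\<in>I. relT_of S L tau (F i))"
  using assms unfolding relT_of_def by auto

lemma G_op_mono: "A \<subseteq> B \<Longrightarrow> G_op S Sig L tau A \<subseteq> G_op S Sig L tau B"
  unfolding G_op_def closed_sets_def R_closed_def relT_of_def by blast

lemma G_op_subset: "G_op S Sig L tau Lam \<subseteq> Sig"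
  unfolding G_op_def closed_sets_def by blast

lemma sigma_algebra_G_op:
  assumes "sigma_algebra S Sig"
  shows "sigma_algebra S (G_op S Sig L tau Lam)"
proof -
  interpret sigma_algebra S Sig by fact
  let ?R = "relT_of S L tau Lam"
  have R_sym: "(y, x) \<in> ?R" and R_in: "y \<in> S" if "(x, y) \<in> ?R" for x y
    using that unfolding relT_of_def by auto
  show ?thesis unfolding sigma_algebra_iff2
  proof (intro conjI ballI allI impI)
    show "G_op S Sig L tau Lam \<subseteq> Pow S" using G_op_subset sets_into_space by blast
    show "{} \<in> G_op S Sig L tau Lam" unfolding G_op_def closed_sets_def R_closed_def by auto
  next
    fix A assume "A \<in> G_op S Sig L tau Lam"
    then have A: "A \<in> Sig" "R_closed ?R A" unfolding G_op_def closed_sets_def by auto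
    have "R_closed ?R (S - A)"
      using A(2) R_sym R_in unfolding R_closed_def by blast
    then show "S - A \<in> G_op S Sig L tau Lam"
      using A(1) unfolding G_op_def closed_sets_def by auto
  next
    fix F :: "nat \<Rightarrow> _" assume "range F \<subseteq> G_op S Sig L tau Lam"
    then have "range F \<subseteq> Sig" "\<forall>i. R_closed ?R (F i)"
      unfolding G_op_def closed_sets_def by auto
    then have "(\<Union>i. F i) \<in> Sig" "R_closed ?R (\<Union>i. F i)"
      unfolding R_closed_def by blast+
    then show "(\<Union>i. F i) \<in> G_op S Sig L tau Lam"
      unfolding G_op_def closed_sets_def by blast
  qed
qed

lemma subset_G_op:
  assumes "Lam \<subseteq> Sig" and "relT_of S L tau Lam \<subseteq> rel_of S Lam"
  shows "Lam \<subseteq> G_op S Sig L tau Lam"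
  using assms unfolding G_op_def closed_sets_def R_closed_def rel_of_def by blast

lemma is_succ_of_less: "is_succ_of a b \<Longrightarrow> b < a"
  unfolding is_succ_of_def by blast

lemma the_is_succ_of: "is_succ_of (a::'i::wellorder) b \<Longrightarrow> (THE b. is_succ_of a b) = b"
  unfolding is_succ_of_def by (rule the_equality) (auto dest: not_less_iff_gr_or_eq[THEN iffD1])

lemma wellorder_least_succ_limit_cases:
  fixes a :: "'i::wellorder"
  obtains (least) "\<forall>b. \<not> b < a" | (succ) b where "is_succ_of a b" | (limit) "is_limit a"
  unfolding is_succ_of_def is_limit_def by blast

lemma is_limit_succ_below:
  assumes "is_limit (l::'i::wellorder)" and "b < l"
  shows "\<exists>c. is_succ_of c b \<and> c < l"
proof -
  obtain g where "b < g" "g < l" using assms unfolding is_limit_def by blast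
  define c where "c = (LEAST c. b < c)"
  have "is_succ_of c b"
    unfolding is_succ_of_def c_def using \<open>b < g\<close> by (metis LeastI not_less_Least)
  moreover have "c \<le> g" unfolding c_def using \<open>b < g\<close> by (rule Least_le)
  ultimately show ?thesis using \<open>g < l\<close> by auto
qed

context
  fixes S :: "'a set" and Sig Sig0 :: "'a set set" and L :: "'l set"
    and tau :: "'l \<Rightarrow> 'a \<Rightarrow> 'a set \<Rightarrow> real"
begin

abbreviation Sigma_iter :: "'i::wellorder \<Rightarrow> 'a set set" where
  "Sigma_iter \<equiv> Sig_iter S Sig L tau Sig0"

lemma Sig_iter_unfold:
  "Sigma_iter a =
    (if \<exists>b. is_succ_of a b then G_op S Sig L tau (Sigma_iter (THE b. is_succ_of a b))
     else if \<forall>b. \<not> b < a then Sig0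
     else sigma_sets S (\<Union>b\<in>{b. b < a}. Sigma_iter b))"
  unfolding Sig_iter_def
proof (rule wfrec_fixpoint[THEN fun_cong])
  show "wf {(x, y). x < (y::'i::wellorder)}" by (rule wf)
  show "adm_wf {(x, y). x < (y::'i::wellorder)}
     (\<lambda>f a. if \<exists>b. is_succ_of a b then G_op S Sig L tau (f (THE b. is_succ_of a b))
            else if \<forall>b. \<not> b < a then Sig0
            else sigma_sets S (\<Union>b\<in>{b. b < a}. f b))"
    unfolding adm_wf_def
    by (auto simp: the_is_succ_of dest: is_succ_of_less
        intro!: arg_cong[where f = "sigma_sets S"])
qed

lemma Sig_iter_least: "\<forall>b. \<not> b < a \<Longrightarrow> Sigma_iter a = Sig0"
  by (subst Sig_iter_unfold) (auto dest: is_succ_of_less)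

lemma Sig_iter_succ: "is_succ_of a b \<Longrightarrow> Sigma_iter a = G_op S Sig L tau (Sigma_iter b)"
  by (subst Sig_iter_unfold) (auto simp: the_is_succ_of)

lemma Sig_iter_limit: "is_limit a \<Longrightarrow> Sigma_iter a = sigma_sets S (\<Union>b\<in>{b. b < a}. Sigma_iter b)"
  by (subst Sig_iter_unfold) (auto simp: is_limit_def is_succ_of_def)

lemma Sig_iter_increasing:
  assumes "sigma_algebra S Sig" and "Sig0 \<subseteq> G_op S Sig L tau Sig0"
  shows "(\<forall>b<a. Sigma_iter b \<subseteq> Sigma_iter a) \<and> Sigma_iter a \<subseteq> G_op S Sig L tau (Sigma_iter a)"
proof (induction a rule: less_induct)
  case (less a)
  show ?case
  proof (cases a rule: wellorder_least_succ_limit_cases)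
    case least
    then show ?thesis using assms(2) by (simp add: Sig_iter_least)
  next
    case (succ b)
    have "b < a" using succ by (rule is_succ_of_less)
    have a_eq: "Sigma_iter a = G_op S Sig L tau (Sigma_iter b)" using succ by (rule Sig_iter_succ)
    have "Sigma_iter b \<subseteq> Sigma_iter a" and below_b: "\<forall>c<b. Sigma_iter c \<subseteq> Sigma_iter b"
      using less[OF \<open>b < a\<close>] a_eq by auto
    moreover have "c \<le> b" if "c < a" for c
      using succ that unfolding is_succ_of_def by (metis not_le)
    ultimately have "\<forall>c<a. Sigma_iter c \<subseteq> Sigma_iter a"
      by (metis order.order_iff_strict subset_trans)
    moreover have "Sigma_iter a \<subseteq> G_op S Sig L tau (Sigma_iter a)"
      using a_eq G_op_mono[OF \<open>Sigma_iter b \<subseteq> Sigma_iter a\<close>] by simp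
    ultimately show ?thesis by blast
  next
    case limit
    then have a_eq: "Sigma_iter a = sigma_sets S (\<Union>b\<in>{b. b < a}. Sigma_iter b)"
      by (rule Sig_iter_limit)
    then have below: "\<forall>b<a. Sigma_iter b \<subseteq> Sigma_iter a"
      by (auto intro: sigma_sets.Basic)
    have "Sigma_iter b \<subseteq> G_op S Sig L tau (Sigma_iter a)" if "b < a" for b
    proof -
      have "Sigma_iter b \<subseteq> G_op S Sig L tau (Sigma_iter b)" using less[OF that] by blast
      also have "\<dots> \<subseteq> G_op S Sig L tau (Sigma_iter a)" using below that by (intro G_op_mono) blast
      finally show ?thesis .
    qed
    then have "Sigma_iter a \<subseteq> G_op S Sig L tau (Sigma_iter a)"
      unfolding a_eq by (intro sigma_algebra.sigma_sets_subset[OF sigma_algebra_G_op[OF assms(1)]]) blast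
    with below show ?thesis by blast
  qed
qed

lemma Sig_iter_mono:
  assumes "sigma_algebra S Sig" and "Sig0 \<subseteq> G_op S Sig L tau Sig0" and "b \<le> a"
  shows "Sigma_iter b \<subseteq> Sigma_iter a"
  using Sig_iter_increasing[OF assms(1,2), of a] \<open>b \<le> a\<close> by (cases "b = a") auto

lemma Sig_iter_subset_G_op:
  assumes "sigma_algebra S Sig" and "Sig0 \<subseteq> G_op S Sig L tau Sig0"
  shows "Sigma_iter a \<subseteq> G_op S Sig L tau (Sigma_iter a)"
  using Sig_iter_increasing[OF assms] by blast

lemma UN_Sig_iter_below_limit:
  assumes "sigma_algebra S Sig" and "Sig0 \<subseteq> G_op S Sig L tau Sig0" and "is_limit l"
  shows "(\<Union>b\<in>{b. b < l}. Sigma_iter b) = (\<Union>b\<in>{b. b < l}. G_op S Sig L tau (Sigma_iter b))"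
proof
  show "(\<Union>b\<in>{b. b < l}. Sigma_iter b) \<subseteq> (\<Union>b\<in>{b. b < l}. G_op S Sig L tau (Sigma_iter b))"
    using Sig_iter_subset_G_op[OF assms(1,2)] by blast
  show "(\<Union>b\<in>{b. b < l}. G_op S Sig L tau (Sigma_iter b)) \<subseteq> (\<Union>b\<in>{b. b < l}. Sigma_iter b)"
  proof (rule UN_least)
    fix b assume "b \<in> {b. b < l}"
    then obtain c where "is_succ_of c b" "c < l" using is_limit_succ_below[OF assms(3)] by blast
    then show "G_op S Sig L tau (Sigma_iter b) \<subseteq> (\<Union>b\<in>{b. b < l}. Sigma_iter b)"
      using Sig_iter_succ by blast
  qed
qed

end

definition transition_measure ::
    "'a set \<Rightarrow> 'a set set \<Rightarrow> ('l \<Rightarrow> 'a \<Rightarrow> 'a set \<Rightarrow> real) \<Rightarrow> 'l \<Rightarrow> 'a \<Rightarrow> 'a measure" where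
  "transition_measure S Sig tau a x = measure_of S Sig (\<lambda>E. ennreal (tau a x E))"

context
  fixes S :: "'a set" and Sig :: "'a set set" and L :: "'l set"
    and tau :: "'l \<Rightarrow> 'a \<Rightarrow> 'a set \<Rightarrow> real"
  assumes lmp: "lmp S Sig L tau"
begin

lemma lmp_sigma_algebra: "sigma_algebra S Sig"
  using lmp unfolding lmp_def by blast

lemma lmp_nonneg: "a \<in> L \<Longrightarrow> x \<in> S \<Longrightarrow> E \<in> Sig \<Longrightarrow> 0 \<le> tau a x E"
  using lmp unfolding lmp_def by blast

lemma lmp_level_set_in_sets:
  assumes "a \<in> L" "E \<in> Sig"
  shows "{x \<in> S. tau a x E = c} \<in> Sig"
proof -
  let ?M = "measure_of S Sig (\<lambda>_. 0)"
  have "(\<lambda>x. tau a x E) \<in> borel_measurable ?M"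
    using lmp assms unfolding lmp_def by blast
  then have "(\<lambda>x. tau a x E) -` {c} \<inter> space ?M \<in> sets ?M"
    by (rule borel_measurable_vimage)
  moreover have "(\<lambda>x. tau a x E) -` {c} \<inter> space ?M = {x \<in> S. tau a x E = c}"
    using lmp_sigma_algebra by (auto simp: sigma_algebra.space_measure_of_eq)
  ultimately show ?thesis
    using lmp_sigma_algebra by (simp add: sigma_algebra.sets_measure_of_eq)
qed

lemma sets_transition_measure: "sets (transition_measure S Sig tau a x) = Sig"
  and space_transition_measure: "space (transition_measure S Sig tau a x) = S"
  unfolding transition_measure_def using lmp_sigma_algebra
  by (simp_all add: sigma_algebra.sets_measure_of_eq sigma_algebra.space_measure_of_eq)

lemma emeasure_transition_measure:
  assumes "a \<in> L" "x \<in> S" "E \<in> Sig"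
  shows "emeasure (transition_measure S Sig tau a x) E = ennreal (tau a x E)"
proof -
  have "measure_space S Sig (\<lambda>E. ennreal (tau a x E))"
    using lmp assms unfolding lmp_def by blast
  then show ?thesis
    unfolding transition_measure_def measure_space_def
    using assms(3) by (intro emeasure_measure_of_sigma) auto
qed

lemma relT_of_sigma_sets:
  assumes "Int_stable U" "U \<subseteq> Sig" "S \<in> U"
  shows "relT_of S L tau (sigma_sets S U) = relT_of S L tau U"
proof
  show "relT_of S L tau (sigma_sets S U) \<subseteq> relT_of S L tau U"
    unfolding relT_of_def by (auto intro: sigma_sets.Basic)
  have sub: "sigma_sets S U \<subseteq> Sig"
    using assms(2) lmp_sigma_algebra by (rule sigma_algebra.sigma_sets_subset[rotated])
  show "relT_of S L tau U \<subseteq> relT_of S L tau (sigma_sets S U)"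
  proof (clarsimp simp: relT_of_def)
    fix s t a E
    assume s: "s \<in> S" and t: "t \<in> S" and agree: "\<forall>a\<in>L. \<forall>E\<in>U. tau a s E = tau a t E"
      and a: "a \<in> L" and E: "E \<in> sigma_sets S U"
    let ?M = "\<lambda>x. transition_measure S Sig tau a x"
    have "emeasure (?M s) E = emeasure (?M t) E"
    proof (rule emeasure_eq_on_sigma_sets_generator)
      show "Int_stable U" by fact
      show "U \<subseteq> sets (?M s)" "space (?M s) \<in> U" "sets (?M t) = sets (?M s)"
        using assms by (simp_all add: sets_transition_measure space_transition_measure)
      show "emeasure (?M s) (space (?M s)) \<noteq> \<infinity>"
        using a s assms by (simp add: space_transition_measure emeasure_transition_measure subsetD)
      show "emeasure (?M s) X = emeasure (?M t) X" if "X \<in> U" for X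
        using that a s t agree assms(2) by (auto simp: emeasure_transition_measure)
      show "E \<in> sigma_sets (space (?M s)) U"
        using E by (simp add: space_transition_measure)
    qed
    then show "tau a s E = tau a t E"
      using a s t E sub by (auto simp: emeasure_transition_measure lmp_nonneg)
  qed
qed

lemma rel_of_G_op:
  assumes "Lam \<subseteq> Sig"
  shows "rel_of S (G_op S Sig L tau Lam) = relT_of S L tau Lam"
proof
  show "relT_of S L tau Lam \<subseteq> rel_of S (G_op S Sig L tau Lam)"
  proof (clarify)
    fix s t assume st: "(s, t) \<in> relT_of S L tau Lam"
    then have ts: "(t, s) \<in> relT_of S L tau Lam" and s: "s \<in> S" and t: "t \<in> S"
      by (simp_all add: relT_of_def)
    have "s \<in> A \<longleftrightarrow> t \<in> A" if "A \<in> G_op S Sig L tau Lam" for A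
      using that st ts unfolding G_op_def closed_sets_def R_closed_def by blast
    then show "(s, t) \<in> rel_of S (G_op S Sig L tau Lam)"
      using s t by (simp add: rel_of_def)
  qed
  show "rel_of S (G_op S Sig L tau Lam) \<subseteq> relT_of S L tau Lam"
  proof (clarify)
    fix s t assume st: "(s, t) \<in> rel_of S (G_op S Sig L tau Lam)"
    then have s: "s \<in> S" and t: "t \<in> S"
      and sep: "\<forall>A\<in>G_op S Sig L tau Lam. s \<in> A \<longleftrightarrow> t \<in> A"
      by (simp_all add: rel_of_def)
    have "tau a s E = tau a t E" if a: "a \<in> L" and E: "E \<in> Lam" for a E
    proof -
      let ?B = "{x \<in> S. tau a x E = tau a s E}"
      have "?B \<in> Sig"
        using assms E by (intro lmp_level_set_in_sets[OF a]) blast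
      moreover have "R_closed (relT_of S L tau Lam) ?B"
      proof (unfold R_closed_def, intro allI impI)
        fix x y assume x: "x \<in> ?B" and xy: "(x, y) \<in> relT_of S L tau Lam"
        from xy have "y \<in> S" and "tau a x E = tau a y E"
          using a E by (simp_all add: relT_of_def)
        moreover have "tau a x E = tau a s E" using x by simp
        ultimately show "y \<in> ?B" by simp
      qed
      ultimately have "?B \<in> G_op S Sig L tau Lam"
        unfolding G_op_def closed_sets_def by blast
      with sep have "s \<in> ?B \<longleftrightarrow> t \<in> ?B" by (rule bspec)
      moreover have "s \<in> ?B" using s by simp
      ultimately have "t \<in> ?B" by (rule iffD1)
      then show ?thesis by simp
    qed
    then show "(s, t) \<in> relT_of S L tau Lam"
      using s t by (simp add: relT_of_def)
  qed
qed

end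

theorem proposition3p9:
  fixes S :: "'a set" and Sig Sig0 :: "'a set set" and L :: "'l set"
    and tau :: "'l \<Rightarrow> 'a \<Rightarrow> 'a set \<Rightarrow> real" and lam :: "'i::wellorder"
  assumes "lmp S Sig L tau"
    and "sigma_algebra S Sig0" and "Sig0 \<subseteq> Sig"
    and "rel_of S Sig0 = relT_of S L tau Sig0"
    and "is_limit lam"
  shows "rel_of S (Sig_iter S Sig L tau Sig0 lam) = relT_of S L tau (Sig_iter S Sig L tau Sig0 lam)"
proof -
  let ?\<Sigma> = "Sig_iter S Sig L tau Sig0" and ?G = "G_op S Sig L tau" and ?I = "{b. b < lam}"
  let ?U = "\<Union>b\<in>?I. ?G (?\<Sigma> b)"
  have Sig: "sigma_algebra S Sig" using assms(1) by (rule lmp_sigma_algebra)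
  have Sig0: "Sig0 \<subseteq> ?G Sig0" using assms(3,4) by (intro subset_G_op) simp_all
  have I: "?I \<noteq> {}" using assms(5) unfolding is_limit_def by blast
  have \<Sigma>_lam: "?\<Sigma> lam = sigma_sets S ?U"
    using UN_Sig_iter_below_limit[OF Sig Sig0 assms(5)] by (simp add: Sig_iter_limit[OF assms(5)])
  have \<Sigma>_Sig: "?\<Sigma> b \<subseteq> Sig" for b :: 'i
    using Sig_iter_subset_G_op[OF Sig Sig0] G_op_subset by blast
  have G_algebra: "algebra S (?G A)" for A
    using sigma_algebra_G_op[OF Sig] by (rule sigma_algebra.axioms(1))
  have "Int_stable ?U"
  proof (rule Int_stable_UN_chain)
    show "mono_on ?I (\<lambda>b. ?G (?\<Sigma> b))"
      by (intro mono_onI G_op_mono Sig_iter_mono[OF Sig Sig0])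
    show "Int_stable (?G (?\<Sigma> b))" for b
      using G_algebra by (rule algebra.Int_stable)
  qed
  moreover have "?U \<subseteq> Sig" using G_op_subset by blast
  moreover have "S \<in> ?U" using I algebra.top[OF G_algebra] by blast
  ultimately have "relT_of S L tau (?\<Sigma> lam) = relT_of S L tau ?U"
    unfolding \<Sigma>_lam by (rule relT_of_sigma_sets[OF assms(1)])
  also have "\<dots> = relT_of S L tau (\<Union>b\<in>?I. ?\<Sigma> b)"
    using UN_Sig_iter_below_limit[OF Sig Sig0 assms(5)] by simp
  also have "\<dots> = (\<Inter>b\<in>?I. rel_of S (?G (?\<Sigma> b)))"
    using I by (simp add: relT_of_UN rel_of_G_op[OF assms(1) \<Sigma>_Sig])
  also have "\<dots> = rel_of S (?\<Sigma> lam)"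
    using I by (simp add: \<Sigma>_lam rel_of_sigma_sets rel_of_UN)
  finally show ?thesis by simp
qed

end
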